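(* Let $G,H$ be non-discrete unimodular lcsc compactly generated groups, $(\Omega,X_G,X_H,\mu)$ a measure equivalence coupling with cocycle $\alpha\colon G\times X_H\to H$, and $\varphi\colon\mathbb{R}_+\to\mathbb{R}_+$ non-decreasing with $t\mapsto t/\varphi(t)$ non-decreasing. Let $f\in\mathrm{L}^1(H)$ with support of finite measure and assume $$C_\varphi:=\int_{S_G}\int_{X_H}\varphi\big(|\alpha(s^{-1},x)|_H\,\|\nabla^{\sup}_Hf\|_1\big)\,d\nu_H(x)\,d\lambda_G(s)<\infty.$$ Then $$\int_{X_G}\|\nabla^{\mathrm{int}}_Gf_x\|_1\,d\nu_G(x)\le C_\varphi\,\frac{2\|f\|_1}{\varphi(2\|f\|_1)}.$$
   Context: Measure equivalence coupling: measure space $(\Omega,\mu)$ with commuting measure-preserving $G$- and $H$-actions (written $\ast$), subsets $X_G,X_H$ with finite measures $\nu_G,\nu_H$ such that $(g,x)\mapsto g\ast x$ is a measure space isomorphism $(G\times X_G,\lambda_G\otimes\nu_G)\to(\Omega,\mu)$ and likewise for $H\times X_H$. $\alpha(g,x)\ast g\ast x$ is the unique point of $(H\ast g\ast x)\cap X_H$. $S_G,S_H$ compact generating sets, $|\cdot|_H$ word length, $\lambda(s)u(g)=u(s^{-1}g)$, $\|\nabla^{\mathrm{int}}_Gu\|_1=\int_{S_G}\|u-\lambda(s)u\|_1\,d\lambda_G(s)$, $\|\nabla^{\sup}_Hf\|_1=\sup_{s\in S_H}\|f-\lambda(s)f\|_1$. Given $f\colon H\to\mathbb{R}$: $\tilde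 f(h\ast x)=f(h^{-1})$ ($h\in H,x\in X_H$), $f_x(g)=\tilde f(g\ast x)$ ($x\in X_G$). *)

theory Defs
  imports "HOL-Analysis.Analysis" "HOL-Probability.Probability"
begin

text \<open>Groups are written additively (class group_add is not assumed commutative):
  the product g h is g + h, the inverse of g is - g, the identity is 0.\<close>

definition lcsc_group :: "'g::{topological_group_add, t2_space, second_countable_topology} itself \<Rightarrow> bool" where
  "lcsc_group _ \<longleftrightarrow> locally_compact_space (euclidean :: 'g topology)"

definition non_discrete :: "'g::topological_space itself \<Rightarrow> bool" where
  "non_discrete _ \<longleftrightarrow> (\<exists>x::'g. \<not> open {x})"

definition haar_measure :: "'g::topological_group_add measure \<Rightarrow> bool" where
  "haar_measure M \<longleftrightarrow> sets M = sets borel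
     \<and> (\<forall>g. \<forall>A\<in>sets borel. emeasure M ((\<lambda>x. g + x) ` A) = emeasure M A)
     \<and> (\<forall>K. compact K \<longrightarrow> emeasure M K < \<infinity>)
     \<and> (\<forall>U. open U \<and> U \<noteq> {} \<longrightarrow> emeasure M U > 0)"

definition unimodular_haar :: "'g::topological_group_add measure \<Rightarrow> bool" where
  "unimodular_haar M \<longleftrightarrow> haar_measure M
     \<and> (\<forall>g. \<forall>A\<in>sets borel. emeasure M ((\<lambda>x. x + g) ` A) = emeasure M A)"

fun words :: "'a::group_add set \<Rightarrow> nat \<Rightarrow> 'a set" where
  "words S 0 = {0}"
| "words S (Suc n) = words S n \<union> {s + w | s w. s \<in> S \<union> uminus ` S \<and> w \<in> words S n}"

definition compact_generating_set :: "'a::{group_add, topological_space} set \<Rightarrow> bool" where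
  "compact_generating_set S \<longleftrightarrow> compact S \<and> (\<forall>g. \<exists>n. g \<in> words S n)"

definition word_length :: "'a::group_add set \<Rightarrow> 'a \<Rightarrow> nat" where
  "word_length S h = (LEAST n. h \<in> words S n)"

definition meas_iso :: "'a measure \<Rightarrow> 'b measure \<Rightarrow> ('a \<Rightarrow> 'b) \<Rightarrow> bool" where
  "meas_iso M N T \<longleftrightarrow> bij_betw T (space M) (space N) \<and> T \<in> M \<rightarrow>\<^sub>M N
     \<and> the_inv_into (space M) T \<in> N \<rightarrow>\<^sub>M M \<and> distr M N T = N"

definition mp_action :: "'w measure \<Rightarrow> ('g::group_add \<Rightarrow> 'w \<Rightarrow> 'w) \<Rightarrow> bool" where
  "mp_action \<mu> act \<longleftrightarrow>
     (\<forall>w\<in>space \<mu>. act 0 w = w)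
   \<and> (\<forall>g1 g2. \<forall>w\<in>space \<mu>. act (g1 + g2) w = act g1 (act g2 w))
   \<and> (\<forall>g. act g \<in> \<mu> \<rightarrow>\<^sub>M \<mu> \<and> distr \<mu> \<mu> (act g) = \<mu>)"

text \<open>Measure equivalence coupling (\<Omega>, X_G, X_H, \<mu>) with \<Omega> = space \<mu>,
  X_G = space \<nu>G, X_H = space \<nu>H.\<close>
definition me_coupling ::
  "'g::topological_group_add measure \<Rightarrow> 'h::topological_group_add measure \<Rightarrow> 'w measure
   \<Rightarrow> ('g \<Rightarrow> 'w \<Rightarrow> 'w) \<Rightarrow> ('h \<Rightarrow> 'w \<Rightarrow> 'w) \<Rightarrow> 'w measure \<Rightarrow> 'w measure \<Rightarrow> bool" where
  "me_coupling lamG lamH \<mu> actG actH \<nu>G \<nu>H \<longleftrightarrow>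
     mp_action \<mu> actG \<and> mp_action \<mu> actH
   \<and> (\<forall>g h. \<forall>w\<in>space \<mu>. actG g (actH h w) = actH h (actG g w))
   \<and> finite_measure \<nu>G \<and> finite_measure \<nu>H
   \<and> space \<nu>G \<subseteq> space \<mu> \<and> space \<nu>H \<subseteq> space \<mu>
   \<and> meas_iso (lamG \<Otimes>\<^sub>M \<nu>G) \<mu> (\<lambda>(g, x). actG g x)
   \<and> meas_iso (lamH \<Otimes>\<^sub>M \<nu>H) \<mu> (\<lambda>(h, x). actH h x)"

text \<open>Cocycle: \<alpha>(g,x) * g * x is the unique point of (H * g * x) \<inter> X_H.\<close>
definition cocycle :: "('g \<Rightarrow> 'w \<Rightarrow> 'w) \<Rightarrow> ('h \<Rightarrow> 'w \<Rightarrow> 'w) \<Rightarrow> 'w set \<Rightarrow> 'g \<Rightarrow> 'w \<Rightarrow> 'h" where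
  "cocycle actG actH XH g x = (THE h. actH h (actG g x) \<in> XH)"

definition ftilde :: "('h::group_add \<Rightarrow> 'w \<Rightarrow> 'w) \<Rightarrow> 'w set \<Rightarrow> ('h \<Rightarrow> real) \<Rightarrow> 'w \<Rightarrow> real" where
  "ftilde actH XH f w = f (- (THE h. \<exists>x\<in>XH. w = actH h x))"

definition fx :: "('g \<Rightarrow> 'w \<Rightarrow> 'w) \<Rightarrow> ('h::group_add \<Rightarrow> 'w \<Rightarrow> 'w) \<Rightarrow> 'w set \<Rightarrow> ('h \<Rightarrow> real) \<Rightarrow> 'w \<Rightarrow> 'g \<Rightarrow> real" where
  "fx actG actH XH f x g = ftilde actH XH f (actG g x)"

definition L1norm :: "'a measure \<Rightarrow> ('a \<Rightarrow> real) \<Rightarrow> ennreal" where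
  "L1norm M u = (\<integral>\<^sup>+ x. ennreal \<bar>u x\<bar> \<partial>M)"

definition ltrans :: "'a::group_add \<Rightarrow> ('a \<Rightarrow> real) \<Rightarrow> 'a \<Rightarrow> real" where
  "ltrans s u g = u (- s + g)"

definition grad_int :: "'a::group_add measure \<Rightarrow> 'a set \<Rightarrow> ('a \<Rightarrow> real) \<Rightarrow> ennreal" where
  "grad_int M S u = (\<integral>\<^sup>+ s \<in> S. L1norm M (\<lambda>g. u g - ltrans s u g) \<partial>M)"

definition grad_sup :: "'a::group_add measure \<Rightarrow> 'a set \<Rightarrow> ('a \<Rightarrow> real) \<Rightarrow> ennreal" where
  "grad_sup M S f = (SUP s\<in>S. L1norm M (\<lambda>g. f g - ltrans s f g))"

end

theory Submission
  imports Defs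
begin

(* For h in H let Q(h) = ||f - f(h + .)||_1. Left invariance of the Haar measure makes Q symmetric
   and subadditive, so Q(h) <= |h|_H ||grad^sup_H f||_1, while trivially Q(h) <= 2 ||f||_1. The two
   monotonicity assumptions on phi give min x y <= phi x * y / phi y, whence
   Q(h) <= phi(|h|_H ||grad^sup_H f||_1) * 2 ||f||_1 / phi(2 ||f||_1).
   On the other side, for fixed s the integral over X_G x G defining
   int_{X_G} ||f_x - lambda(s) f_x||_1 is an integral over Omega; rewriting it as an integral
   over X_H x H (and using that the unimodular Haar measure of H is inversion invariant) turns it
   into exactly int_{X_H} Q(alpha(s^-1, y)) d nu_H(y). Integrating over S_G gives the theorem. *)

lemma vimage_add_left:
  fixes g :: "'a::group_add"
  shows "(\<lambda>x. g + x) -` A = (\<lambda>x. - g + x) ` A"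
proof (rule set_eqI)
  fix x
  have "x = - g + (g + x)" by (simp add: add.assoc[symmetric])
  then show "x \<in> (\<lambda>x. g + x) -` A \<longleftrightarrow> x \<in> (\<lambda>x. - g + x) ` A" by force
qed

lemma vimage_add_right:
  fixes g :: "'a::group_add"
  shows "(\<lambda>x. x + g) -` A = (\<lambda>x. x + - g) ` A"
proof (rule set_eqI)
  fix x
  have "x = x + g + - g" by simp
  then show "x \<in> (\<lambda>x. x + g) -` A \<longleftrightarrow> x \<in> (\<lambda>x. x + - g) ` A" by force
qed

lemma space_eq_UNIV_if_sets_borel: "sets M = sets borel \<Longrightarrow> space M = UNIV"
  by (metis sets_eq_imp_space_eq space_borel)

lemma borel_measurable_uminus_group[measurable (raw)]:
  fixes f :: "'a \<Rightarrow> 'b::{topological_group_add, second_countable_topology}"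
  assumes "f \<in> borel_measurable M"
  shows "(\<lambda>x. - f x) \<in> borel_measurable M"
  by (rule borel_measurable_continuous_on[OF _ assms]) (intro continuous_intros)

lemma measurable_fst_borel: "sets M = sets borel \<Longrightarrow> fst \<in> borel_measurable (M \<Otimes>\<^sub>M N)"
  by (metis measurable_cong_sets measurable_fst)

lemma measurable_snd_borel: "sets N = sets borel \<Longrightarrow> snd \<in> borel_measurable (M \<Otimes>\<^sub>M N)"
  by (metis measurable_cong_sets measurable_snd)

lemma distr_self_eqI:
  assumes sets: "sets M = sets borel" and T: "T \<in> borel_measurable borel"
    and inv: "\<And>A. A \<in> sets borel \<Longrightarrow> emeasure M (T -` A) = emeasure M A"
  shows "distr M M T = M"
proof (rule measure_eqI)
  fix A assume "A \<in> sets (distr M M T)"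
  moreover have "T \<in> M \<rightarrow>\<^sub>M M"
    using T by (simp add: measurable_cong_sets[OF sets sets])
  ultimately show "emeasure (distr M M T) A = emeasure M A"
    using inv sets by (simp add: emeasure_distr space_eq_UNIV_if_sets_borel)
qed simp

lemma nn_integral_distr_self:
  assumes "distr M M T = M" and "T \<in> M \<rightarrow>\<^sub>M M" and "F \<in> borel_measurable M"
  shows "(\<integral>\<^sup>+x. F (T x) \<partial>M) = (\<integral>\<^sup>+x. F x \<partial>M)"
  using nn_integral_distr[OF assms(2), of F] assms by simp

lemma sigma_finite_if_locally_finite:
  fixes M :: "'a::second_countable_topology measure"
  assumes sets: "sets M = sets borel"
    and local: "\<And>x. \<exists>U. open U \<and> x \<in> U \<and> emeasure M U < \<infinity>"
  shows "sigma_finite_measure M"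
proof
  define \<U> where "\<U> = {U. open U \<and> emeasure M U < \<infinity>}"
  have "\<And>U. U \<in> \<U> \<Longrightarrow> open U" by (simp add: \<U>_def)
  then obtain \<V> where \<V>: "\<V> \<subseteq> \<U>" "countable \<V>" "\<Union>\<V> = \<Union>\<U>"
    by (rule Lindelof)
  have "\<Union>\<U> = space M"
    using local unfolding \<U>_def space_eq_UNIV_if_sets_borel[OF sets] by blast
  moreover have "\<V> \<subseteq> sets M" "\<forall>V\<in>\<V>. emeasure M V \<noteq> \<infinity>"
    using \<V>(1) sets unfolding \<U>_def by auto
  ultimately show "\<exists>A. countable A \<and> A \<subseteq> sets M \<and> \<Union>A = space M \<and> (\<forall>a\<in>A. emeasure M a \<noteq> \<infinity>)"
    using \<V>(2,3) by (intro exI[of _ \<V>] conjI) simp_all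
qed

text \<open>Unlike \<open>nn_integral_multc\<close>, this needs no measurability of \<open>f\<close>: it is applied to
  word lengths of cocycle values, whose measurability is not available.\<close>

lemma nn_integral_multc_le:
  assumes "0 \<le> c"
  shows "(\<integral>\<^sup>+x. f x * ennreal c \<partial>M) \<le> (\<integral>\<^sup>+x. f x \<partial>M) * ennreal c"
proof (cases "c = 0")
  case False
  with assms have c: "ennreal c * ennreal (1 / c) = 1"
    by (simp flip: ennreal_mult)
  show ?thesis
    unfolding nn_integral_def[of M "\<lambda>x. f x * ennreal c"]
  proof (rule SUP_least)
    fix g assume g: "g \<in> {g. simple_function M g \<and> g \<le> (\<lambda>x. f x * ennreal c)}"
    define g' where "g' x = ennreal (1 / c) * g x" for x
    have g': "simple_function M g'"
      using g simple_function_compose[of M g "\<lambda>v. ennreal (1 / c) * v"] unfolding g'_def o_def by simp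
    have "g' \<le> f"
    proof (rule le_funI)
      fix x
      have "g' x \<le> ennreal (1 / c) * (f x * ennreal c)"
        using g unfolding g'_def by (auto simp: le_fun_def intro: mult_left_mono)
      also have "\<dots> = f x" using c by (metis mult.assoc mult.commute mult_1_right)
      finally show "g' x \<le> f x" .
    qed
    have "integral\<^sup>S M g = (\<integral>\<^sup>Sx. ennreal c * g' x \<partial>M)"
      using c by (simp add: g'_def mult.assoc[symmetric])
    also have "\<dots> = ennreal c * integral\<^sup>S M g'"
      using g' by (rule simple_integral_mult)
    also have "\<dots> \<le> ennreal c * integral\<^sup>N M f"
      using nn_integral_eq_simple_integral[OF g'] nn_integral_mono[of M g' f] \<open>g' \<le> f\<close>
      by (intro mult_left_mono) (auto simp: le_fun_def)
    finally show "integral\<^sup>S M g \<le> (\<integral>\<^sup>+x. f x \<partial>M) * ennreal c"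
      by (simp add: mult.commute)
  qed
qed simp

lemma nn_integral_orbit_map:
  assumes iso: "meas_iso (L \<Otimes>\<^sub>M N) \<Omega> (\<lambda>(g, x). act g x)"
    and L: "sigma_finite_measure L" and N: "sigma_finite_measure N"
    and F: "F \<in> borel_measurable \<Omega>"
  shows "(\<integral>\<^sup>+x. (\<integral>\<^sup>+g. F (act g x) \<partial>L) \<partial>N) = integral\<^sup>N \<Omega> F"
proof -
  interpret pair_sigma_finite L N using L N by (simp add: pair_sigma_finite_def)
  have act: "(\<lambda>(g, x). act g x) \<in> L \<Otimes>\<^sub>M N \<rightarrow>\<^sub>M \<Omega>"
    and distr: "distr (L \<Otimes>\<^sub>M N) \<Omega> (\<lambda>(g, x). act g x) = \<Omega>"
    using iso by (simp_all add: meas_iso_def)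
  have "(\<integral>\<^sup>+x. (\<integral>\<^sup>+g. F (act g x) \<partial>L) \<partial>N) = (\<integral>\<^sup>+p. F (case p of (g, x) \<Rightarrow> act g x) \<partial>(L \<Otimes>\<^sub>M N))"
    using nn_integral_snd[OF measurable_compose[OF act F]] by (simp add: o_def)
  also have "\<dots> = integral\<^sup>N \<Omega> F"
    using nn_integral_distr[OF act, of F] F distr by simp
  finally show ?thesis .
qed

section \<open>Haar measures\<close>

lemma haar_measure_sets: "haar_measure M \<Longrightarrow> sets M = sets borel"
  by (simp add: haar_measure_def)

lemma unimodular_haar_imp_haar: "unimodular_haar M \<Longrightarrow> haar_measure M"
  by (simp add: unimodular_haar_def)

lemma haar_measure_left_invariant:
  "haar_measure M \<Longrightarrow> A \<in> sets borel \<Longrightarrow> emeasure M ((\<lambda>x. g + x) ` A) = emeasure M A"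
  by (simp add: haar_measure_def)

lemma unimodular_haar_right_invariant:
  "unimodular_haar M \<Longrightarrow> A \<in> sets borel \<Longrightarrow> emeasure M ((\<lambda>x. x + g) ` A) = emeasure M A"
  by (simp add: unimodular_haar_def)

lemma distr_left_translation_haar:
  fixes M :: "'g::topological_group_add measure"
  assumes "haar_measure M"
  shows "distr M M (\<lambda>x. g + x) = M"
proof (rule distr_self_eqI)
  show "sets M = sets borel" using assms by (rule haar_measure_sets)
  fix A :: "'g set" assume "A \<in> sets borel"
  with assms show "emeasure M ((\<lambda>x. g + x) -` A) = emeasure M A"
    unfolding vimage_add_left by (rule haar_measure_left_invariant)
qed (intro borel_measurable_continuous_onI continuous_intros)

lemma distr_right_translation_unimodular:
  fixes M :: "'g::topological_group_add measure"
  assumes "unimodular_haar M"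
  shows "distr M M (\<lambda>x. x + g) = M"
proof (rule distr_self_eqI)
  show "sets M = sets borel" using assms by (simp add: unimodular_haar_imp_haar haar_measure_sets)
  fix A :: "'g set" assume "A \<in> sets borel"
  with assms show "emeasure M ((\<lambda>x. x + g) -` A) = emeasure M A"
    unfolding vimage_add_right by (rule unimodular_haar_right_invariant)
qed (intro borel_measurable_continuous_onI continuous_intros)

lemma nn_integral_left_translation_haar:
  fixes M :: "'g::topological_group_add measure"
  assumes "haar_measure M" and "F \<in> borel_measurable borel"
  shows "(\<integral>\<^sup>+x. F (g + x) \<partial>M) = (\<integral>\<^sup>+x. F x \<partial>M)"
proof (rule nn_integral_distr_self[OF distr_left_translation_haar[OF assms(1)]])
  have sets: "sets M = sets borel" using assms(1) by (rule haar_measure_sets)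
  show "(+) g \<in> M \<rightarrow>\<^sub>M M"
    unfolding measurable_cong_sets[OF sets sets]
    by (intro borel_measurable_continuous_onI continuous_intros)
  show "F \<in> borel_measurable M" using assms(2) by (simp add: measurable_cong_sets[OF sets refl])
qed

lemma nn_integral_right_translation_unimodular:
  fixes M :: "'g::topological_group_add measure"
  assumes "unimodular_haar M" and "F \<in> borel_measurable borel"
  shows "(\<integral>\<^sup>+x. F (x + g) \<partial>M) = (\<integral>\<^sup>+x. F x \<partial>M)"
proof (rule nn_integral_distr_self[OF distr_right_translation_unimodular[OF assms(1)]])
  have sets: "sets M = sets borel"
    using assms(1) by (simp add: unimodular_haar_imp_haar haar_measure_sets)
  show "(\<lambda>x. x + g) \<in> M \<rightarrow>\<^sub>M M"
    unfolding measurable_cong_sets[OF sets sets]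
    by (intro borel_measurable_continuous_onI continuous_intros)
  show "F \<in> borel_measurable M" using assms(2) by (simp add: measurable_cong_sets[OF sets refl])
qed

lemma haar_measure_compact_finite: "haar_measure M \<Longrightarrow> compact K \<Longrightarrow> emeasure M K < \<infinity>"
  unfolding haar_measure_def by meson

lemma haar_measure_open_pos: "haar_measure M \<Longrightarrow> open U \<Longrightarrow> U \<noteq> {} \<Longrightarrow> 0 < emeasure M U"
  unfolding haar_measure_def by meson

lemma haar_measure_locally_finite:
  fixes M :: "'g::{topological_group_add, t2_space} measure"
  assumes "haar_measure M" and "locally_compact_space (euclidean :: 'g topology)"
  obtains U where "open U" "x \<in> U" "0 < emeasure M U" "emeasure M U < \<infinity>"
proof -
  from assms(2) have "\<exists>U K. openin euclidean U \<and> compactin euclidean K \<and> x \<in> U \<and> U \<subseteq> K"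
    unfolding locally_compact_space_def by (rule bspec) simp
  then obtain U K where UK: "open U" "compact K" "x \<in> U" "U \<subseteq> K"
    by (metis compactin_euclidean_iff open_openin)
  have "K \<in> sets M"
    using assms(1) UK(2) by (simp add: haar_measure_sets borel_closed compact_imp_closed)
  with UK(4) have "emeasure M U \<le> emeasure M K"
    by (rule emeasure_mono)
  also have "\<dots> < \<infinity>"
    using assms(1) UK(2) by (rule haar_measure_compact_finite)
  finally show thesis
    using UK haar_measure_open_pos[OF assms(1)] by (intro that[of U]) auto
qed

lemma haar_measure_sigma_finite:
  fixes M :: "'g::{topological_group_add, t2_space, second_countable_topology} measure"
  assumes "haar_measure M" and "locally_compact_space (euclidean :: 'g topology)"
  shows "sigma_finite_measure M"
proof (rule sigma_finite_if_locally_finite)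
  show "sets M = sets borel" using assms(1) by (rule haar_measure_sets)
  fix x :: 'g
  obtain U where "open U" "x \<in> U" "emeasure M U < \<infinity>"
    using haar_measure_locally_finite[OF assms] by blast
  then show "\<exists>U. open U \<and> x \<in> U \<and> emeasure M U < \<infinity>" by blast
qed

lemma nn_integral_indicator_left_translation_haar:
  fixes M :: "'g::topological_group_add measure"
  assumes "haar_measure M" and "A \<in> sets borel"
  shows "(\<integral>\<^sup>+x. indicator A (g + x) \<partial>M) = emeasure M A"
  using assms by (subst nn_integral_left_translation_haar) (auto simp: haar_measure_sets)

lemma nn_integral_indicator_right_translation_unimodular:
  fixes M :: "'g::topological_group_add measure"
  assumes "unimodular_haar M" and "A \<in> sets borel"
  shows "(\<integral>\<^sup>+x. indicator A (x + g) \<partial>M) = emeasure M A"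
  using assms
  by (subst nn_integral_right_translation_unimodular) (auto simp: haar_measure_sets unimodular_haar_imp_haar)

context
  fixes M :: "'g::{topological_group_add, second_countable_topology} measure" and U A :: "'g set"
  assumes unimod: "unimodular_haar M" and sf: "sigma_finite_measure M"
    and U: "U \<in> sets borel" and A: "A \<in> sets borel"
begin

text \<open>The function \<open>(x, y) \<mapsto> 1\<^sub>U(x + y) 1\<^sub>A(-y)\<close> is integrated in both orders: right
  invariance in \<open>x\<close> gives \<open>\<mu> U \<cdot> \<mu> (-A)\<close>, left invariance in \<open>y\<close> gives \<open>\<mu> U \<cdot> \<mu> A\<close>.\<close>

lemma nn_integral_indicator_add_neg_inner_x:
  "(\<integral>\<^sup>+y. (\<integral>\<^sup>+x. indicator U (x + y) * indicator A (- y) \<partial>M) \<partial>M)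
    = emeasure M U * emeasure M (uminus -` A)"
proof -
  have sets: "sets M = sets borel" by (simp add: unimod unimodular_haar_imp_haar haar_measure_sets)
  have "(\<integral>\<^sup>+x. indicator U (x + y) * indicator A (- y) \<partial>M) = emeasure M U * indicator (uminus -` A) y"
    for y :: 'g
  proof -
    have "(\<integral>\<^sup>+x. indicator U (x + y) * indicator A (- y) \<partial>M) = (\<integral>\<^sup>+x. indicator U (x + y) \<partial>M) * indicator A (- y)"
      by (intro nn_integral_multc) (use U sets in measurable)
    then show ?thesis
      using nn_integral_indicator_right_translation_unimodular[OF unimod U] by (simp add: indicator_def)
  qed
  moreover have "uminus -` A \<in> sets M"
    using measurable_sets_borel[OF borel_measurable_uminus_group[OF measurable_ident] A] sets by simp
  ultimately show ?thesis by (simp add: nn_integral_cmult_indicator)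
qed

lemma nn_integral_indicator_add_neg_inner_y:
  "(\<integral>\<^sup>+x. (\<integral>\<^sup>+y. indicator U (x + y) * indicator A (- y) \<partial>M) \<partial>M) = emeasure M U * emeasure M A"
proof -
  have haar: "haar_measure M" using unimod by (rule unimodular_haar_imp_haar)
  have sets: "sets M = sets borel" using haar by (rule haar_measure_sets)
  interpret pair_sigma_finite M M using sf by (simp add: pair_sigma_finite_def)
  note [measurable] = measurable_fst_borel[OF sets] measurable_snd_borel[OF sets]
  have "(\<integral>\<^sup>+y. indicator U (x + y) * indicator A (- y) \<partial>M)
      = (\<integral>\<^sup>+y. indicator U (x + (- x + y)) * indicator A (- (- x + y)) \<partial>M)" for x
    by (intro nn_integral_left_translation_haar[OF haar, symmetric]) (use U A in measurable)
  then have "(\<integral>\<^sup>+x. (\<integral>\<^sup>+y. indicator U (x + y) * indicator A (- y) \<partial>M) \<partial>M)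
      = (\<integral>\<^sup>+x. (\<integral>\<^sup>+y. indicator U y * indicator A (- y + x) \<partial>M) \<partial>M)"
    by (simp add: add.assoc[symmetric] minus_add)
  also have "\<dots> = (\<integral>\<^sup>+y. (\<integral>\<^sup>+x. indicator U y * indicator A (- y + x) \<partial>M) \<partial>M)"
    by (intro Fubini'[symmetric]) (use U A in measurable)
  also have "\<dots> = (\<integral>\<^sup>+y. emeasure M A * indicator U y \<partial>M)"
  proof (rule nn_integral_cong)
    fix y
    have "(\<integral>\<^sup>+x. indicator U y * indicator A (- y + x) \<partial>M)
        = indicator U y * (\<integral>\<^sup>+x. indicator A (- y + x) \<partial>M)"
      by (intro nn_integral_cmult) (use A sets in measurable)
    then show "(\<integral>\<^sup>+x. indicator U y * indicator A (- y + x) \<partial>M) = emeasure M A * indicator U y"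
      using nn_integral_indicator_left_translation_haar[OF haar A] by (simp add: mult.commute)
  qed
  also have "\<dots> = emeasure M A * emeasure M U"
    using U sets by (intro nn_integral_cmult_indicator) simp
  finally show ?thesis by (simp add: mult.commute)
qed

lemma emeasure_mult_uminus_unimodular:
  "emeasure M U * emeasure M (uminus -` A) = emeasure M U * emeasure M A"
proof -
  have sets: "sets M = sets borel" by (simp add: unimod unimodular_haar_imp_haar haar_measure_sets)
  interpret pair_sigma_finite M M using sf by (simp add: pair_sigma_finite_def)
  note [measurable] = measurable_fst_borel[OF sets] measurable_snd_borel[OF sets]
  have "(\<integral>\<^sup>+y. (\<integral>\<^sup>+x. indicator U (x + y) * indicator A (- y) \<partial>M) \<partial>M)
      = (\<integral>\<^sup>+x. (\<integral>\<^sup>+y. indicator U (x + y) * indicator A (- y) \<partial>M) \<partial>M)"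
    by (intro Fubini') (use U A in measurable)
  then show ?thesis
    unfolding nn_integral_indicator_add_neg_inner_x nn_integral_indicator_add_neg_inner_y .
qed

end

lemma distr_uminus_unimodular:
  fixes M :: "'g::{topological_group_add, t2_space, second_countable_topology} measure"
  assumes unimod: "unimodular_haar M" and lc: "locally_compact_space (euclidean :: 'g topology)"
  shows "distr M M uminus = M"
proof (rule distr_self_eqI)
  have haar: "haar_measure M" using unimod by (rule unimodular_haar_imp_haar)
  then show "sets M = sets borel" by (rule haar_measure_sets)
  obtain U :: "'g set" where U: "open U" "0 < emeasure M U" "emeasure M U < \<infinity>"
    using haar_measure_locally_finite[OF haar lc] by blast
  fix A :: "'g set" assume "A \<in> sets borel"
  with U show "emeasure M (uminus -` A) = emeasure M A"
    using emeasure_mult_uminus_unimodular[OF unimod haar_measure_sigma_finite[OF haar lc], of U A]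
    by (auto simp: ennreal_mult_cancel_left)
qed (intro borel_measurable_continuous_onI continuous_intros)

section \<open>The \<open>L\<^sup>1\<close> distance between a function and its translates\<close>

definition shift_dist :: "'a::group_add measure \<Rightarrow> ('a \<Rightarrow> real) \<Rightarrow> 'a \<Rightarrow> ennreal" where
  "shift_dist M f h = (\<integral>\<^sup>+k. ennreal \<bar>f k - f (h + k)\<bar> \<partial>M)"

lemma L1norm_diff_ltrans: "L1norm M (\<lambda>g. f g - ltrans s f g) = shift_dist M f (- s)"
  unfolding L1norm_def shift_dist_def ltrans_def by simp

lemma shift_dist_zero [simp]: "shift_dist M f 0 = 0"
  unfolding shift_dist_def by simp

lemma ennreal_abs_diff_triangle:
  fixes a b c :: real
  shows "ennreal \<bar>a - c\<bar> \<le> ennreal \<bar>a - b\<bar> + ennreal \<bar>b - c\<bar>"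
proof -
  have "\<bar>a - c\<bar> \<le> \<bar>a - b\<bar> + \<bar>b - c\<bar>" by linarith
  then show ?thesis by (simp add: ennreal_plus[symmetric] del: ennreal_plus)
qed

context
  fixes M :: "'g::{topological_group_add, second_countable_topology} measure" and f :: "'g \<Rightarrow> real"
  assumes haar: "haar_measure M" and f: "f \<in> borel_measurable borel"
begin

lemma borel_measurable_haar: "F \<in> borel_measurable borel \<Longrightarrow> F \<in> borel_measurable M"
  using measurable_cong_sets[OF haar_measure_sets[OF haar] refl] by blast

lemma shift_dist_uminus: "shift_dist M f (- h) = shift_dist M f h"
proof -
  have "shift_dist M f (- h) = (\<integral>\<^sup>+k. ennreal \<bar>f (h + k) - f (- h + (h + k))\<bar> \<partial>M)"
    unfolding shift_dist_def
    by (rule nn_integral_left_translation_haar[OF haar, symmetric]) (use f in measurable)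
  also have "\<dots> = shift_dist M f h"
    by (simp add: shift_dist_def add.assoc[symmetric] abs_minus_commute)
  finally show ?thesis .
qed

lemma shift_dist_add_le: "shift_dist M f (h + h') \<le> shift_dist M f h + shift_dist M f h'"
proof -
  have "shift_dist M f (h + h') \<le>
      (\<integral>\<^sup>+k. ennreal \<bar>f k - f (h' + k)\<bar> + ennreal \<bar>f (h' + k) - f (h + (h' + k))\<bar> \<partial>M)"
    unfolding shift_dist_def by (intro nn_integral_mono) (simp add: add.assoc ennreal_abs_diff_triangle)
  also have "\<dots> = shift_dist M f h' + (\<integral>\<^sup>+k. ennreal \<bar>f (h' + k) - f (h + (h' + k))\<bar> \<partial>M)"
    unfolding shift_dist_def by (rule nn_integral_add; rule borel_measurable_haar; use f in measurable)
  also have "(\<integral>\<^sup>+k. ennreal \<bar>f (h' + k) - f (h + (h' + k))\<bar> \<partial>M) = shift_dist M f h"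
    unfolding shift_dist_def
    by (rule nn_integral_left_translation_haar[OF haar, where F = "\<lambda>k. ennreal \<bar>f k - f (h + k)\<bar>"])
      (use f in measurable)
  finally show ?thesis by (simp add: add.commute)
qed

lemma shift_dist_le_grad_sup:
  assumes "s \<in> S \<union> uminus ` S"
  shows "shift_dist M f s \<le> grad_sup M S f"
proof -
  have "shift_dist M f (- t) \<le> grad_sup M S f" if "t \<in> S" for t
    unfolding grad_sup_def L1norm_diff_ltrans[symmetric] using that by (rule SUP_upper)
  with assms show ?thesis by (auto simp: shift_dist_uminus)
qed

lemma shift_dist_le_words: "h \<in> words S n \<Longrightarrow> shift_dist M f h \<le> of_nat n * grad_sup M S f"
proof (induction n arbitrary: h)
  case (Suc n)
  show ?case
  proof (cases "h \<in> words S n")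
    case True
    then have "shift_dist M f h \<le> of_nat n * grad_sup M S f" by (rule Suc.IH)
    also have "\<dots> \<le> of_nat (Suc n) * grad_sup M S f" by (intro mult_right_mono) auto
    finally show ?thesis .
  next
    case False
    then obtain s w where sw: "h = s + w" "s \<in> S \<union> uminus ` S" "w \<in> words S n"
      using Suc.prems by auto
    have "shift_dist M f h \<le> shift_dist M f s + shift_dist M f w"
      unfolding sw(1) by (rule shift_dist_add_le)
    also have "\<dots> \<le> grad_sup M S f + of_nat n * grad_sup M S f"
      by (intro add_mono shift_dist_le_grad_sup Suc.IH sw(2,3))
    finally show ?thesis by (simp add: algebra_simps)
  qed
qed simp

lemma shift_dist_le_L1: "shift_dist M f h \<le> 2 * (\<integral>\<^sup>+k. ennreal \<bar>f k\<bar> \<partial>M)"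
proof -
  have "shift_dist M f h \<le> (\<integral>\<^sup>+k. ennreal \<bar>f k\<bar> + ennreal \<bar>f (h + k)\<bar> \<partial>M)"
    unfolding shift_dist_def
  proof (rule nn_integral_mono)
    fix k
    show "ennreal \<bar>f k - f (h + k)\<bar> \<le> ennreal \<bar>f k\<bar> + ennreal \<bar>f (h + k)\<bar>"
      using ennreal_abs_diff_triangle[of "f k" "f (h + k)" 0] by simp
  qed
  also have "\<dots> = (\<integral>\<^sup>+k. ennreal \<bar>f k\<bar> \<partial>M) + (\<integral>\<^sup>+k. ennreal \<bar>f (h + k)\<bar> \<partial>M)"
    by (rule nn_integral_add; rule borel_measurable_haar; use f in measurable)
  also have "(\<integral>\<^sup>+k. ennreal \<bar>f (h + k)\<bar> \<partial>M) = (\<integral>\<^sup>+k. ennreal \<bar>f k\<bar> \<partial>M)"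
    by (rule nn_integral_left_translation_haar[OF haar, where F = "\<lambda>k. ennreal \<bar>f k\<bar>"])
      (use f in measurable)
  finally show ?thesis by (simp add: mult_2)
qed

lemma grad_sup_le_L1: "grad_sup M S f \<le> 2 * (\<integral>\<^sup>+k. ennreal \<bar>f k\<bar> \<partial>M)"
  unfolding grad_sup_def L1norm_diff_ltrans by (rule SUP_least) (rule shift_dist_le_L1)

end

lemma in_words_word_length: "compact_generating_set S \<Longrightarrow> h \<in> words S (word_length S h)"
  unfolding compact_generating_set_def word_length_def by (meson LeastI_ex)

lemma min_le_mult_ratio:
  fixes \<phi> :: "real \<Rightarrow> real"
  assumes nonneg: "\<forall>t\<ge>0. 0 \<le> \<phi> t" and pos: "\<forall>t>0. 0 < \<phi> t"
    and mono: "mono_on {0..} \<phi>" and ratio_mono: "mono_on {0<..} (\<lambda>t. t / \<phi> t)"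
    and "0 \<le> a" "0 \<le> b"
  shows "min a b \<le> \<phi> a * (b / \<phi> b)"
proof -
  consider "b = 0" | "a = 0" "0 < b" | "0 < a" "a \<le> b" | "0 < b" "b < a"
    using \<open>0 \<le> a\<close> \<open>0 \<le> b\<close> by linarith
  then show ?thesis
  proof cases
    case 2
    then show ?thesis using nonneg pos by simp
  next
    case 3
    then have "a / \<phi> a \<le> b / \<phi> b" using ratio_mono by (auto intro: mono_onD)
    moreover have "0 < \<phi> a" using 3 pos by simp
    ultimately have "\<phi> a * (a / \<phi> a) \<le> \<phi> a * (b / \<phi> b)"
      by (intro mult_left_mono) auto
    then show ?thesis using 3 \<open>0 < \<phi> a\<close> by simp
  next
    case 4
    then have "\<phi> b \<le> \<phi> a" using mono by (auto intro: mono_onD)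
    moreover have "0 < \<phi> b" using 4 pos by simp
    ultimately have "\<phi> b * (b / \<phi> b) \<le> \<phi> a * (b / \<phi> b)"
      using 4 by (intro mult_right_mono) auto
    then show ?thesis using 4 \<open>0 < \<phi> b\<close> by simp
  qed (use \<open>0 \<le> a\<close> in simp)
qed

lemma shift_dist_le_phi:
  fixes M :: "'g::{topological_group_add, second_countable_topology} measure" and \<phi> :: "real \<Rightarrow> real"
  assumes haar: "haar_measure M" and f: "integrable M f" and S: "compact_generating_set S"
    and nonneg: "\<forall>t\<ge>0. 0 \<le> \<phi> t" and pos: "\<forall>t>0. 0 < \<phi> t"
    and mono: "mono_on {0..} \<phi>" and ratio_mono: "mono_on {0<..} (\<lambda>t. t / \<phi> t)"
  defines "N \<equiv> \<integral> k. \<bar>f k\<bar> \<partial>M"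
  shows "shift_dist M f h
    \<le> ennreal (\<phi> (real (word_length S h) * enn2real (grad_sup M S f))) * ennreal (2 * N / \<phi> (2 * N))"
proof -
  have f_borel: "f \<in> borel_measurable borel"
    using borel_measurable_integrable[OF f] measurable_cong_sets[OF haar_measure_sets[OF haar] refl]
    by blast
  have "0 \<le> N" unfolding N_def by simp
  have L1: "2 * (\<integral>\<^sup>+k. ennreal \<bar>f k\<bar> \<partial>M) = ennreal (2 * N)"
    unfolding N_def using f by (simp add: nn_integral_eq_integral ennreal_mult)
  define x where "x = real (word_length S h) * enn2real (grad_sup M S f)"
  have "0 \<le> x" unfolding x_def by simp
  have "grad_sup M S f \<le> ennreal (2 * N)"
    using grad_sup_le_L1[OF haar f_borel, of S] L1 by simp
  then have "grad_sup M S f < top"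
    by (rule le_less_trans[OF _ ennreal_less_top])
  have "shift_dist M f h \<le> of_nat (word_length S h) * grad_sup M S f"
    by (rule shift_dist_le_words[OF haar f_borel in_words_word_length[OF S]])
  also have "\<dots> = ennreal x"
    using \<open>grad_sup M S f < top\<close> unfolding x_def
    by (simp add: ennreal_mult ennreal_of_nat_eq_real_of_nat)
  finally have "shift_dist M f h \<le> ennreal x" .
  moreover have "shift_dist M f h \<le> ennreal (2 * N)"
    using shift_dist_le_L1[OF haar f_borel] L1 by simp
  ultimately have "shift_dist M f h \<le> ennreal (min x (2 * N))"
    by (simp add: min_def)
  also have "\<dots> \<le> ennreal (\<phi> x * (2 * N / \<phi> (2 * N)))"
    using min_le_mult_ratio[OF nonneg pos mono ratio_mono \<open>0 \<le> x\<close>] \<open>0 \<le> N\<close> by (simp add: ennreal_leI)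
  also have "\<dots> = ennreal (\<phi> x) * ennreal (2 * N / \<phi> (2 * N))"
    using nonneg \<open>0 \<le> x\<close> \<open>0 \<le> N\<close> by (intro ennreal_mult) auto
  finally show ?thesis unfolding x_def .
qed

section \<open>Measure equivalence couplings\<close>

locale borel_me_coupling =
  fixes lamG :: "'g::{topological_group_add, second_countable_topology} measure"
    and lamH :: "'h::{topological_group_add, second_countable_topology} measure"
    and \<mu> \<nu>G \<nu>H :: "'w measure"
    and actG :: "'g \<Rightarrow> 'w \<Rightarrow> 'w" and actH :: "'h \<Rightarrow> 'w \<Rightarrow> 'w"
  assumes coupling: "me_coupling lamG lamH \<mu> actG actH \<nu>G \<nu>H"
    and sets_lamG: "sets lamG = sets borel" and sets_lamH: "sets lamH = sets borel"
    and sigma_finite_lamG: "sigma_finite_measure lamG"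
    and sigma_finite_lamH: "sigma_finite_measure lamH"
    and distr_uminus_lamH: "distr lamH lamH uminus = lamH"
begin

abbreviation \<alpha> :: "'g \<Rightarrow> 'w \<Rightarrow> 'h" where
  "\<alpha> \<equiv> cocycle actG actH (space \<nu>H)"

lemma
  shows mp_action_actG: "mp_action \<mu> actG" and mp_action_actH: "mp_action \<mu> actH"
    and actG_actH_commute: "\<And>w. w \<in> space \<mu> \<Longrightarrow> actG g (actH h w) = actH h (actG g w)"
    and finite_\<nu>G: "finite_measure \<nu>G" and finite_\<nu>H: "finite_measure \<nu>H"
    and XG_subset: "space \<nu>G \<subseteq> space \<mu>" and XH_subset: "space \<nu>H \<subseteq> space \<mu>"
    and iso_G: "meas_iso (lamG \<Otimes>\<^sub>M \<nu>G) \<mu> (\<lambda>(g, x). actG g x)"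
    and iso_H: "meas_iso (lamH \<Otimes>\<^sub>M \<nu>H) \<mu> (\<lambda>(h, x). actH h x)"
  using coupling unfolding me_coupling_def by simp_all

lemma actG_add: "w \<in> space \<mu> \<Longrightarrow> actG (g + g') w = actG g (actG g' w)"
  using mp_action_actG unfolding mp_action_def by simp

lemma actH_add: "w \<in> space \<mu> \<Longrightarrow> actH (h + h') w = actH h (actH h' w)"
  using mp_action_actH unfolding mp_action_def by simp

lemma actH_zero: "w \<in> space \<mu> \<Longrightarrow> actH 0 w = w"
  using mp_action_actH unfolding mp_action_def by simp

lemma actG_space: "w \<in> space \<mu> \<Longrightarrow> actG g w \<in> space \<mu>"
  using mp_action_actG unfolding mp_action_def by (meson measurable_space)

lemma actG_measurable [measurable]: "actG g \<in> \<mu> \<rightarrow>\<^sub>M \<mu>"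
  using mp_action_actG unfolding mp_action_def by simp

lemma measurable_actG_pair [measurable (raw)]:
  assumes "a \<in> M \<rightarrow>\<^sub>M borel" and "b \<in> M \<rightarrow>\<^sub>M \<nu>G"
  shows "(\<lambda>q. actG (a q) (b q)) \<in> M \<rightarrow>\<^sub>M \<mu>"
proof -
  have "a \<in> M \<rightarrow>\<^sub>M lamG"
    using assms(1) measurable_cong_sets[OF refl sets_lamG] by blast
  then have "(\<lambda>q. (a q, b q)) \<in> M \<rightarrow>\<^sub>M lamG \<Otimes>\<^sub>M \<nu>G"
    using assms(2) by (rule measurable_Pair)
  moreover have "(\<lambda>(g, x). actG g x) \<in> lamG \<Otimes>\<^sub>M \<nu>G \<rightarrow>\<^sub>M \<mu>"
    using iso_G unfolding meas_iso_def by simp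
  ultimately have "(\<lambda>q. case (a q, b q) of (g, x) \<Rightarrow> actG g x) \<in> M \<rightarrow>\<^sub>M \<mu>"
    by (rule measurable_compose)
  then show ?thesis by simp
qed

lemma bij_betw_orbit_map_H: "bij_betw (\<lambda>(h, x). actH h x) (UNIV \<times> space \<nu>H) (space \<mu>)"
  using iso_H sets_lamH
  unfolding meas_iso_def by (simp add: space_pair_measure space_eq_UNIV_if_sets_borel)

lemma actH_inj:
  assumes "x \<in> space \<nu>H" "y \<in> space \<nu>H" "actH h x = actH h' y"
  shows "h = h'" "x = y"
  using bij_betw_imp_inj_on[OF bij_betw_orbit_map_H] assms by (auto dest: inj_onD[of _ _ "(h, x)" "(h', y)"])

definition H_coord :: "'w \<Rightarrow> 'h \<times> 'w" where
  "H_coord = the_inv_into (UNIV \<times> space \<nu>H) (\<lambda>(h, x). actH h x)"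

lemma H_coord_measurable: "H_coord \<in> \<mu> \<rightarrow>\<^sub>M lamH \<Otimes>\<^sub>M \<nu>H"
  using iso_H sets_lamH unfolding meas_iso_def H_coord_def
  by (simp add: space_pair_measure space_eq_UNIV_if_sets_borel)

lemma H_coord:
  assumes "w \<in> space \<mu>"
  shows "snd (H_coord w) \<in> space \<nu>H" "actH (fst (H_coord w)) (snd (H_coord w)) = w"
proof -
  have "H_coord w \<in> UNIV \<times> space \<nu>H" "(\<lambda>(h, x). actH h x) (H_coord w) = w"
    using bij_betw_orbit_map_H assms unfolding H_coord_def
    by (auto intro: the_inv_into_into f_the_inv_into_f_bij_betw simp: bij_betw_def)
  then show "snd (H_coord w) \<in> space \<nu>H" "actH (fst (H_coord w)) (snd (H_coord w)) = w"
    by (auto simp: split_beta)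
qed

lemma ftilde_actH:
  assumes "x \<in> space \<nu>H"
  shows "ftilde actH (space \<nu>H) f (actH h x) = f (- h)"
proof -
  have "(THE h'. \<exists>x'\<in>space \<nu>H. actH h x = actH h' x') = h"
    using assms actH_inj by (intro the_equality) auto
  then show ?thesis unfolding ftilde_def by simp
qed

lemma ftilde_measurable [measurable]:
  assumes "f \<in> borel_measurable borel"
  shows "ftilde actH (space \<nu>H) f \<in> borel_measurable \<mu>"
proof -
  have "(\<lambda>w. fst (H_coord w)) \<in> borel_measurable \<mu>"
    using measurable_compose[OF H_coord_measurable measurable_fst_borel[OF sets_lamH]] by (simp add: o_def)
  then have "(\<lambda>w. f (- fst (H_coord w))) \<in> borel_measurable \<mu>"
    using assms by measurable
  moreover have "f (- fst (H_coord w)) = ftilde actH (space \<nu>H) f w" if "w \<in> space \<mu>" for w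
    using ftilde_actH[OF H_coord(1)[OF that], of f "fst (H_coord w)"] H_coord(2)[OF that] by simp
  ultimately show ?thesis by (simp cong: measurable_cong)
qed

lemma cocycle_eq:
  assumes x: "x \<in> space \<nu>H" and y: "y \<in> space \<nu>H" and eq: "actG g x = actH b y"
  shows "\<alpha> g x = - b"
  unfolding cocycle_def
proof (rule the_equality)
  have yO: "y \<in> space \<mu>" using y XH_subset by blast
  show "actH (- b) (actG g x) \<in> space \<nu>H"
    using eq y actH_add[OF yO, of "- b" b] actH_zero[OF yO] by simp
  fix h assume "actH h (actG g x) \<in> space \<nu>H"
  moreover have "actH h (actG g x) = actH (h + b) y" using eq actH_add[OF yO] by simp
  ultimately have "actH (h + b) y = actH 0 (actH (h + b) y)"
    using actH_zero XH_subset by auto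
  then have "h + b = 0"
    using actH_inj(1) y \<open>actH h (actG g x) \<in> space \<nu>H\<close> \<open>actH h (actG g x) = actH (h + b) y\<close> by metis
  then show "h = - b" by (simp add: eq_neg_iff_add_eq_0)
qed

lemma nn_integral_ftilde_diff:
  assumes x: "x \<in> space \<nu>H" and f: "f \<in> borel_measurable borel"
  shows "(\<integral>\<^sup>+h. ennreal \<bar>ftilde actH (space \<nu>H) f (actH h x)
      - ftilde actH (space \<nu>H) f (actG g (actH h x))\<bar> \<partial>lamH) = shift_dist lamH f (\<alpha> g x)"
proof -
  have "actG g x \<in> space \<mu>" using x XH_subset actG_space by blast
  then obtain b y where y: "y \<in> space \<nu>H" "actG g x = actH b y"
    using H_coord by metis
  have yO: "y \<in> space \<mu>" using y XH_subset by blast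
  have "actG g (actH h x) = actH (h + b) y" for h
    using x XH_subset y actG_actH_commute actH_add[OF yO] by auto
  then have "(\<integral>\<^sup>+h. ennreal \<bar>ftilde actH (space \<nu>H) f (actH h x)
      - ftilde actH (space \<nu>H) f (actG g (actH h x))\<bar> \<partial>lamH)
    = (\<integral>\<^sup>+h. ennreal \<bar>f (- h) - f (- b + - h)\<bar> \<partial>lamH)"
    using x y ftilde_actH by (simp add: minus_add)
  also have "\<dots> = (\<integral>\<^sup>+k. ennreal \<bar>f k - f (- b + k)\<bar> \<partial>lamH)"
  proof (rule nn_integral_distr_self[OF distr_uminus_lamH, where F = "\<lambda>k. ennreal \<bar>f k - f (- b + k)\<bar>"])
    show "uminus \<in> lamH \<rightarrow>\<^sub>M lamH"
      unfolding measurable_cong_sets[OF sets_lamH sets_lamH] by measurable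
    show "(\<lambda>k. ennreal \<bar>f k - f (- b + k)\<bar>) \<in> borel_measurable lamH"
      unfolding measurable_cong_sets[OF sets_lamH refl] using f by measurable
  qed
  also have "\<dots> = shift_dist lamH f (\<alpha> g x)"
    unfolding shift_dist_def cocycle_eq[OF x y] ..
  finally show ?thesis .
qed

lemma nn_integral_L1norm_fx_diff:
  assumes f: "f \<in> borel_measurable borel"
  shows "(\<integral>\<^sup>+x. L1norm lamG (\<lambda>g. fx actG actH (space \<nu>H) f x g
      - ltrans s (fx actG actH (space \<nu>H) f x) g) \<partial>\<nu>G)
    = (\<integral>\<^sup>+y. shift_dist lamH f (\<alpha> (- s) y) \<partial>\<nu>H)"
proof -
  define F where "F w = ennreal \<bar>ftilde actH (space \<nu>H) f w - ftilde actH (space \<nu>H) f (actG (- s) w)\<bar>" for w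
  have F: "F \<in> borel_measurable \<mu>"
    unfolding F_def using f by measurable
  have "(\<integral>\<^sup>+x. L1norm lamG (\<lambda>g. fx actG actH (space \<nu>H) f x g
      - ltrans s (fx actG actH (space \<nu>H) f x) g) \<partial>\<nu>G) = (\<integral>\<^sup>+x. (\<integral>\<^sup>+g. F (actG g x) \<partial>lamG) \<partial>\<nu>G)"
    using XG_subset actG_add
    by (intro nn_integral_cong) (auto simp: L1norm_def fx_def ltrans_def F_def)
  also have "\<dots> = integral\<^sup>N \<mu> F"
    using iso_G sigma_finite_lamG finite_measure.sigma_finite_measure[OF finite_\<nu>G] F
    by (rule nn_integral_orbit_map)
  also have "\<dots> = (\<integral>\<^sup>+y. (\<integral>\<^sup>+h. F (actH h y) \<partial>lamH) \<partial>\<nu>H)"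
    using iso_H sigma_finite_lamH finite_measure.sigma_finite_measure[OF finite_\<nu>H] F
    by (rule nn_integral_orbit_map[symmetric])
  also have "\<dots> = (\<integral>\<^sup>+y. shift_dist lamH f (\<alpha> (- s) y) \<partial>\<nu>H)"
    unfolding F_def using f by (intro nn_integral_cong nn_integral_ftilde_diff)
  finally show ?thesis .
qed

lemma nn_integral_grad_int_fx:
  assumes f: "f \<in> borel_measurable borel" and SG: "SG \<in> sets borel"
  shows "(\<integral>\<^sup>+x. grad_int lamG SG (fx actG actH (space \<nu>H) f x) \<partial>\<nu>G)
    = (\<integral>\<^sup>+s\<in>SG. (\<integral>\<^sup>+y. shift_dist lamH f (\<alpha> (- s) y) \<partial>\<nu>H) \<partial>lamG)"
proof -
  interpret pair_sigma_finite \<nu>G lamG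
    using finite_measure.sigma_finite_measure[OF finite_\<nu>G] sigma_finite_lamG
    by (simp add: pair_sigma_finite_def)
  define K where "K x s = L1norm lamG (\<lambda>g. fx actG actH (space \<nu>H) f x g
      - ltrans s (fx actG actH (space \<nu>H) f x) g) * indicator SG s" for x s
  define J where "J p g = ennreal \<bar>ftilde actH (space \<nu>H) f (actG g (fst p))
      - ftilde actH (space \<nu>H) f (actG (- snd p + g) (fst p))\<bar>" for p g
  have sets_prod: "sets (\<nu>G \<Otimes>\<^sub>M lamG) = sets (\<nu>G \<Otimes>\<^sub>M borel)"
    by (rule sets_pair_measure_cong[OF refl sets_lamG])
  have "case_prod J \<in> borel_measurable ((\<nu>G \<Otimes>\<^sub>M lamG) \<Otimes>\<^sub>M lamG)"
    unfolding measurable_cong_sets[OF sets_pair_measure_cong[OF sets_prod sets_lamG] refl] J_def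
    using f by measurable
  then have "(\<lambda>p. \<integral>\<^sup>+g. J p g \<partial>lamG) \<in> borel_measurable (\<nu>G \<Otimes>\<^sub>M lamG)"
    by (rule sigma_finite_measure.borel_measurable_nn_integral[OF sigma_finite_lamG])
  moreover have "(\<lambda>p. indicator SG (snd p) :: ennreal) \<in> borel_measurable (\<nu>G \<Otimes>\<^sub>M lamG)"
    unfolding measurable_cong_sets[OF sets_prod refl] using SG by measurable
  ultimately have "case_prod K \<in> borel_measurable (\<nu>G \<Otimes>\<^sub>M lamG)"
    unfolding K_def L1norm_def fx_def ltrans_def J_def split_beta' by measurable
  then have "(\<integral>\<^sup>+x. (\<integral>\<^sup>+s. K x s \<partial>lamG) \<partial>\<nu>G) = (\<integral>\<^sup>+s. (\<integral>\<^sup>+x. K x s \<partial>\<nu>G) \<partial>lamG)"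
    by (rule Fubini'[symmetric])
  moreover have "(\<integral>\<^sup>+x. K x s \<partial>\<nu>G) = (\<integral>\<^sup>+y. shift_dist lamH f (\<alpha> (- s) y) \<partial>\<nu>H) * indicator SG s" for s
    unfolding K_def using nn_integral_L1norm_fx_diff[OF f, of s] by (cases "s \<in> SG") simp_all
  ultimately show ?thesis
    unfolding grad_int_def K_def by simp
qed

lemma nn_integral_grad_int_fx_le:
  assumes f: "f \<in> borel_measurable borel" and SG: "SG \<in> sets borel" and "0 \<le> c"
    and bound: "\<And>a. shift_dist lamH f a \<le> B a * ennreal c"
  shows "(\<integral>\<^sup>+x. grad_int lamG SG (fx actG actH (space \<nu>H) f x) \<partial>\<nu>G)
    \<le> (\<integral>\<^sup>+s\<in>SG. (\<integral>\<^sup>+y. B (\<alpha> (- s) y) \<partial>\<nu>H) \<partial>lamG) * ennreal c"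
proof -
  have "(\<integral>\<^sup>+y. shift_dist lamH f (\<alpha> (- s) y) \<partial>\<nu>H) \<le> (\<integral>\<^sup>+y. B (\<alpha> (- s) y) \<partial>\<nu>H) * ennreal c" for s
    using nn_integral_mono[OF bound] nn_integral_multc_le[OF \<open>0 \<le> c\<close>] by (rule order_trans)
  then have "(\<integral>\<^sup>+s\<in>SG. (\<integral>\<^sup>+y. shift_dist lamH f (\<alpha> (- s) y) \<partial>\<nu>H) \<partial>lamG)
      \<le> (\<integral>\<^sup>+s. (\<integral>\<^sup>+y. B (\<alpha> (- s) y) \<partial>\<nu>H) * indicator SG s * ennreal c \<partial>lamG)"
    by (intro nn_integral_mono) (simp add: indicator_def)
  also have "\<dots> \<le> (\<integral>\<^sup>+s\<in>SG. (\<integral>\<^sup>+y. B (\<alpha> (- s) y) \<partial>\<nu>H) \<partial>lamG) * ennreal c"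
    using \<open>0 \<le> c\<close> by (rule nn_integral_multc_le)
  finally show ?thesis
    using nn_integral_grad_int_fx[OF f SG] by simp
qed

end

theorem mainTheorem14:
  fixes lamG :: "'g::{topological_group_add, t2_space, second_countable_topology} measure"
    and lamH :: "'h::{topological_group_add, t2_space, second_countable_topology} measure"
    and \<mu> \<nu>G \<nu>H :: "'w measure"
    and actG :: "'g \<Rightarrow> 'w \<Rightarrow> 'w" and actH :: "'h \<Rightarrow> 'w \<Rightarrow> 'w"
    and SG :: "'g set" and SH :: "'h set"
    and \<phi> :: "real \<Rightarrow> real" and f :: "'h \<Rightarrow> real"
  assumes "lcsc_group TYPE('g)" and "lcsc_group TYPE('h)"
    and "non_discrete TYPE('g)" and "non_discrete TYPE('h)"
    and "unimodular_haar lamG" and "unimodular_haar lamH"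
    and "compact_generating_set SG" and "compact_generating_set SH"
    and "me_coupling lamG lamH \<mu> actG actH \<nu>G \<nu>H"
    and "\<forall>t\<ge>0. \<phi> t \<ge> 0" and "\<forall>t>0. \<phi> t > 0"
    and "mono_on {0..} \<phi>"
    and "mono_on {0<..} (\<lambda>t. t / \<phi> t)"
    and "integrable lamH f"
    and "emeasure lamH {h. f h \<noteq> 0} < \<infinity>"
    and "(\<integral>\<^sup>+ s \<in> SG. (\<integral>\<^sup>+ x. ennreal (\<phi> (real (word_length SH (cocycle actG actH (space \<nu>H) (- s) x))
              * enn2real (grad_sup lamH SH f))) \<partial>\<nu>H) \<partial>lamG) < \<infinity>"
  shows "(\<integral>\<^sup>+ x. grad_int lamG SG (fx actG actH (space \<nu>H) f x) \<partial>\<nu>G)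
    \<le> (\<integral>\<^sup>+ s \<in> SG. (\<integral>\<^sup>+ x. ennreal (\<phi> (real (word_length SH (cocycle actG actH (space \<nu>H) (- s) x))
              * enn2real (grad_sup lamH SH f))) \<partial>\<nu>H) \<partial>lamG)
       * ennreal (2 * (\<integral> h. \<bar>f h\<bar> \<partial>lamH) / \<phi> (2 * (\<integral> h. \<bar>f h\<bar> \<partial>lamH)))"
proof -
  have haar_G: "haar_measure lamG" and haar_H: "haar_measure lamH"
    using assms(5,6) by (simp_all add: unimodular_haar_imp_haar)
  have lc_G: "locally_compact_space (euclidean :: 'g topology)"
    and lc_H: "locally_compact_space (euclidean :: 'h topology)"
    using assms(1,2) by (simp_all add: lcsc_group_def)
  interpret borel_me_coupling lamG lamH \<mu> \<nu>G \<nu>H actG actH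
    by (rule borel_me_coupling.intro[OF assms(9) haar_measure_sets[OF haar_G] haar_measure_sets[OF haar_H]
      haar_measure_sigma_finite[OF haar_G lc_G] haar_measure_sigma_finite[OF haar_H lc_H]
      distr_uminus_unimodular[OF assms(6) lc_H]])
  have f: "f \<in> borel_measurable borel"
    using borel_measurable_integrable[OF assms(14)] measurable_cong_sets[OF haar_measure_sets[OF haar_H] refl]
    by blast
  have SG: "SG \<in> sets borel"
    using assms(7) by (simp add: compact_generating_set_def borel_closed compact_imp_closed)
  show ?thesis
    using assms(10) by (intro nn_integral_grad_int_fx_le[OF f SG] shift_dist_le_phi[OF haar_H assms(14,8,10-13)]) simp
qed

end
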